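(* Let $\bar\eta=(\bar\pi,\bar\mu_0,\bar\mu_1,\bar f_{j|-j})$ be arbitrary candidate nuisance functions (not necessarily equal to the true ones $\eta=(\pi,\mu_0,\mu_1,f_{j|-j})$), with $0<\bar\pi<1$ and $\bar f_{j|-j}>0$. Then $$\mathbb E\left[\varphi^{\mathrm{pd}}_j(\mathbf Z;\bar\eta)\mid V_j=v_j\right]=\theta_j(v_j)$$ provided that either $(\bar\mu_0,\bar\mu_1)=(\mu_0,\mu_1)$ or $(\bar\pi,\bar f_{j|-j})=(\pi,f_{j|-j})$.
   Context: Observed data $\mathbf Z=(\mathbf X,A,Y)$ with covariates $\mathbf X$, binary treatment $A\in\{0,1\}$, real outcome $Y$, drawn from $\mathbb P$, with $0<\pi(\mathbf X)<1$. $\mathbf V=(V_j,\mathbf V_{-j})$ is a subvector of $\mathbf X$, with $V_j$ a continuous coordinate and $\mathbf V_{-j}$ the remaining coordinates of $\mathbf V$. True nuisances: $\pi(\mathbf X)=\mathbb P(A=1\mid\mathbf X)$, $\mu_a(\mathbf X)=\mathbb E[Y\mid A=a,\mathbf X]$, and $f_{j|-j}(v_j\mid\boldsymbol v_{-j})$ the conditional density of $V_j$ given $\mathbf V_{-j}$. Let $\tau_x(\mathbf X)=\mu_1(\mathbf X)-\mu_0(\mathbf X)$, $\tau_v(\boldsymbol v)=\mathbb E[\tau_x(\mathbf X)\mid\mathbf V=\boldsymbol v]$ and the partial dependence function $\theta_j(v_j)=\int\tau_v(v_j,\boldsymbol v_{-j})\,d\mathbb P(\boldsymbol v_{-j})$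 (integration against the marginal law of $\mathbf V_{-j}$). For nuisances $\bar\eta$, write $\bar\tau_x=\bar\mu_1-\bar\mu_0$, $\bar\mu_A$ for $\bar\mu_a$ at $a=A$, and define the pseudo-outcome $$\varphi^{\mathrm{pd}}_j(\mathbf Z;\bar\eta)=\left[\frac{\{A-\bar\pi(\mathbf X)\}\{Y-\bar\mu_A(\mathbf X)\}}{\bar\pi(\mathbf X)\{1-\bar\pi(\mathbf X)\}}+\bar\tau_x(\mathbf X)-\mathbb E\{\bar\tau_x(\mathbf X)\mid\mathbf V\}\right]\frac{\int\bar f_{j|-j}(V_j\mid\boldsymbol v_{-j})\,d\mathbb P(\boldsymbol v_{-j})}{\bar f_{j|-j}(V_j\mid\mathbf V_{-j})}+\int\mathbb E[\bar\tau_x(\mathbf X)\mid V_j,\mathbf V_{-j}=\boldsymbol v_{-j}]\,d\mathbb P(\boldsymbol v_{-j}),$$ where the conditional expectations and the marginal law $\mathbb P(\boldsymbol v_{-j})$ are under the true $\mathbb P$. *)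

theory Defs
  imports "HOL-Probability.Probability"
begin

definition cond_fn ::
  "'o measure \<Rightarrow> ('o \<Rightarrow> 'b) \<Rightarrow> 'b measure \<Rightarrow> ('o \<Rightarrow> real) \<Rightarrow> 'b \<Rightarrow> real" where
  "cond_fn M V N g = (SOME h. h \<in> borel_measurable N \<and>
     (AE \<omega> in M. real_cond_exp M (vimage_algebra (space M) V N) g \<omega> = h (V \<omega>)))"

definition marg_Vm :: "'o measure \<Rightarrow> ('o \<Rightarrow> 'x) \<Rightarrow> 'w measure \<Rightarrow> ('x \<Rightarrow> 'w) \<Rightarrow> 'w measure" where
  "marg_Vm M X SW vm = distr M SW (\<lambda>\<omega>. vm (X \<omega>))"

definition cond_on_V ::
  "'o measure \<Rightarrow> ('o \<Rightarrow> 'x) \<Rightarrow> 'w measure \<Rightarrow> ('x \<Rightarrow> real) \<Rightarrow> ('x \<Rightarrow> 'w)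
   \<Rightarrow> ('x \<Rightarrow> real) \<Rightarrow> real \<times> 'w \<Rightarrow> real" where
  "cond_on_V M X SW vj vm t = cond_fn M (\<lambda>\<omega>. (vj (X \<omega>), vm (X \<omega>))) (borel \<Otimes>\<^sub>M SW) (\<lambda>\<omega>. t (X \<omega>))"

text \<open>Partial dependence function theta_j(v_j) = int tau_v(v_j, w) dP(w),
  with tau_x = mu1 - mu0.\<close>
definition theta_pd ::
  "'o measure \<Rightarrow> ('o \<Rightarrow> 'x) \<Rightarrow> 'w measure \<Rightarrow> ('x \<Rightarrow> real) \<Rightarrow> ('x \<Rightarrow> 'w)
   \<Rightarrow> ('x \<Rightarrow> real) \<Rightarrow> ('x \<Rightarrow> real) \<Rightarrow> real \<Rightarrow> real" where
  "theta_pd M X SW vj vm mu0 mu1 v =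
     (\<integral>w. cond_on_V M X SW vj vm (\<lambda>x. mu1 x - mu0 x) (v, w) \<partial>(marg_Vm M X SW vm))"

definition ipw_res ::
  "('o \<Rightarrow> 'x) \<Rightarrow> ('o \<Rightarrow> real) \<Rightarrow> ('o \<Rightarrow> real) \<Rightarrow> ('x \<Rightarrow> real) \<Rightarrow> ('x \<Rightarrow> real)
   \<Rightarrow> ('x \<Rightarrow> real) \<Rightarrow> 'o \<Rightarrow> real" where
  "ipw_res X A Y pib mu0b mu1b \<omega> =
     (A \<omega> - pib (X \<omega>)) * (Y \<omega> - (if A \<omega> = 1 then mu1b (X \<omega>) else mu0b (X \<omega>)))
       / (pib (X \<omega>) * (1 - pib (X \<omega>)))"

definition phi_pd ::
  "'o measure \<Rightarrow> ('o \<Rightarrow> 'x) \<Rightarrow> ('o \<Rightarrow> real) \<Rightarrow> ('o \<Rightarrow> real) \<Rightarrow> 'w measure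
   \<Rightarrow> ('x \<Rightarrow> real) \<Rightarrow> ('x \<Rightarrow> 'w)
   \<Rightarrow> ('x \<Rightarrow> real) \<Rightarrow> ('x \<Rightarrow> real) \<Rightarrow> ('x \<Rightarrow> real) \<Rightarrow> (real \<Rightarrow> 'w \<Rightarrow> real)
   \<Rightarrow> 'o \<Rightarrow> real" where
  "phi_pd M X A Y SW vj vm pib mu0b mu1b fb \<omega> =
     (let x = X \<omega>;
          Q = marg_Vm M X SW vm;
          g = cond_on_V M X SW vj vm (\<lambda>x. mu1b x - mu0b x)
      in (ipw_res X A Y pib mu0b mu1b \<omega> + (mu1b x - mu0b x) - g (vj x, vm x))
           * ((\<integral>w. fb (vj x) w \<partial>Q) / fb (vj x) (vm x))
         + (\<integral>w. g (vj x, w) \<partial>Q))"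

end

theory Submission
  imports Defs
begin

text \<open>
  Write the pseudo-outcome as \<open>\<phi> = W T + L(V\<^sub>j)\<close>, where \<open>T\<close> is the IPW residual plus
  \<open>\<tau>'\<^sub>x(X) - \<tau>'\<^sub>v(V)\<close>, \<open>W = m(V\<^sub>j) / f'(V\<^sub>j, V\<^sub>-\<^sub>j)\<close> with \<open>m(v) = \<integral> f'(v, w) dQ(w)\<close> and \<open>Q\<close> the
  law of \<open>V\<^sub>-\<^sub>j\<close>, and \<open>L(v) = \<integral> \<tau>'\<^sub>v(v, w) dQ(w)\<close> (primes mark the candidate nuisances).
  Conditioning on \<open>V\<close> first, \<open>W\<close> factors out and \<open>\<tau>'\<^sub>x(X) - \<tau>'\<^sub>v(V)\<close> has mean zero, so
  \<open>E[\<phi> | V] = W E[residual | V] + L(V\<^sub>j)\<close>. If the outcome regressions are correct, the residual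
  already has mean zero given \<open>(X, A)\<close> and \<open>\<tau>'\<^sub>v = \<tau>\<^sub>v\<close>; if the propensity score is correct,
  inverse weighting gives \<open>E[residual | X] = \<tau>\<^sub>x - \<tau>'\<^sub>x\<close>. Either way
  \<open>E[\<phi> | V] = W (\<tau>\<^sub>v - \<tau>'\<^sub>v)(V) + L(V\<^sub>j)\<close>. Conditioning on \<open>V\<^sub>j\<close> next, the weight \<open>W\<close> is harmless
  when \<open>\<tau>\<^sub>v - \<tau>'\<^sub>v = 0\<close>, and when \<open>f'\<close> is the true conditional density it is exactly the density
  ratio that turns \<open>E[g(V) W | V\<^sub>j]\<close> into \<open>\<integral> g(V\<^sub>j, w) dQ(w)\<close>. Adding \<open>L(V\<^sub>j)\<close> leaves
  \<open>\<integral> \<tau>\<^sub>v(V\<^sub>j, w) dQ(w) = \<theta>\<^sub>j(V\<^sub>j)\<close>.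
\<close>

section \<open>Measurability with respect to generated \<open>\<sigma>\<close>-algebras\<close>

lemma measurable_vimage_algebra_compose:
  assumes "U \<in> measurable M N" and "g \<in> measurable N K"
  shows "(\<lambda>\<omega>. g (U \<omega>)) \<in> measurable (vimage_algebra (space M) U N) K"
proof -
  have "U \<in> space M \<rightarrow> space N" using assms(1) by (auto simp: measurable_def)
  from measurable_comp[OF measurable_vimage_algebra1[OF this] assms(2)] show ?thesis
    by (simp add: o_def)
qed

lemma subalgebra_vimage_algebra:
  assumes "U \<in> measurable M N"
  shows "subalgebra M (vimage_algebra (space M) U N)"
  unfolding subalgebra_def using sets_image_in_sets[OF refl assms] by simp

lemma subalgebra_vimage_algebra_compose:
  assumes "U \<in> measurable M N" and "g \<in> measurable N K"
  shows "subalgebra (vimage_algebra (space M) U N) (vimage_algebra (space M) (\<lambda>\<omega>. g (U \<omega>)) K)"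
  unfolding subalgebra_def
  using sets_image_in_sets[OF _ measurable_vimage_algebra_compose[OF assms]] by simp

lemma (in finite_measure) finite_measure_subalgebra_vimage_algebra:
  assumes "U \<in> measurable M N"
  shows "finite_measure_subalgebra M (vimage_algebra (space M) U N)"
  by (simp add: finite_measure_subalgebra_def finite_measure_subalgebra_axioms_def
      finite_measure_axioms subalgebra_vimage_algebra[OF assms])

lemma borel_measurable_vimage_algebra_factor_nonneg:
  assumes V: "V \<in> \<Omega> \<rightarrow> space N"
    and u: "u \<in> borel_measurable (vimage_algebra \<Omega> V N)" "\<And>x. 0 \<le> u x"
  shows "\<exists>h \<in> borel_measurable N. \<forall>\<omega>\<in>\<Omega>. u \<omega> = (h (V \<omega>) :: real)"
  using u
proof (induction rule: borel_measurable_induct_real)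
  case (set S)
  then obtain B where "B \<in> sets N" "S = V -` B \<inter> \<Omega>"
    using sets_vimage_algebra2[OF V] by auto
  then show ?case
    by (intro bexI[of _ "indicator B"]) (auto simp: indicator_def)
next
  case (mult u c)
  then obtain h where h[measurable]: "h \<in> borel_measurable N" and "\<forall>\<omega>\<in>\<Omega>. u \<omega> = h (V \<omega>)"
    by blast
  then show ?case by (intro bexI[of _ "\<lambda>y. c * h y"]) simp_all
next
  case (add u v)
  then obtain h g where [measurable]: "h \<in> borel_measurable N" "g \<in> borel_measurable N"
    and "\<forall>\<omega>\<in>\<Omega>. u \<omega> = h (V \<omega>)" "\<forall>\<omega>\<in>\<Omega>. v \<omega> = g (V \<omega>)"
    by blast
  then show ?case by (intro bexI[of _ "\<lambda>y. g y + h y"]) simp_all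
next
  case (seq U)
  then obtain h where h: "\<And>i. h i \<in> borel_measurable N" "\<And>i \<omega>. \<omega> \<in> \<Omega> \<Longrightarrow> U i \<omega> = h i (V \<omega>)"
    by metis
  show ?case
  proof (intro bexI[of _ "\<lambda>y. lim (\<lambda>i. h i y)"] ballI)
    fix \<omega> assume "\<omega> \<in> \<Omega>"
    then have "(\<lambda>i. h i (V \<omega>)) \<longlonglongrightarrow> u \<omega>" using seq h(2) by simp
    then show "u \<omega> = lim (\<lambda>i. h i (V \<omega>))" by (simp add: limI)
  qed (rule borel_measurable_lim_metric[OF h(1)])
qed

lemma borel_measurable_vimage_algebra_factor:
  assumes V: "V \<in> \<Omega> \<rightarrow> space N"
    and u[measurable]: "u \<in> borel_measurable (vimage_algebra \<Omega> V N)"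
  shows "\<exists>h \<in> borel_measurable N. \<forall>\<omega>\<in>\<Omega>. u \<omega> = (h (V \<omega>) :: real)"
proof -
  obtain h1 where [measurable]: "h1 \<in> borel_measurable N" and h1: "\<forall>\<omega>\<in>\<Omega>. max (u \<omega>) 0 = h1 (V \<omega>)"
    using borel_measurable_vimage_algebra_factor_nonneg[OF V, of "\<lambda>\<omega>. max (u \<omega>) 0"] by force
  obtain h2 where [measurable]: "h2 \<in> borel_measurable N" and h2: "\<forall>\<omega>\<in>\<Omega>. max (- u \<omega>) 0 = h2 (V \<omega>)"
    using borel_measurable_vimage_algebra_factor_nonneg[OF V, of "\<lambda>\<omega>. max (- u \<omega>) 0"] by force
  show ?thesis
  proof (intro bexI[of _ "\<lambda>y. h1 y - h2 y"] ballI)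
    fix \<omega> assume "\<omega> \<in> \<Omega>"
    with h1 h2 have "h1 (V \<omega>) = max (u \<omega>) 0" "h2 (V \<omega>) = max (- u \<omega>) 0" by auto
    then show "u \<omega> = h1 (V \<omega>) - h2 (V \<omega>)" by simp
  qed measurable
qed

lemma
  assumes "V \<in> measurable M N"
  shows cond_fn_measurable: "cond_fn M V N g \<in> borel_measurable N"
    and real_cond_exp_eq_cond_fn:
      "AE \<omega> in M. real_cond_exp M (vimage_algebra (space M) V N) g \<omega> = cond_fn M V N g (V \<omega>)"
proof -
  have "V \<in> space M \<rightarrow> space N" using assms by (auto simp: measurable_def)
  then obtain h where "h \<in> borel_measurable N"
    "\<forall>\<omega>\<in>space M. real_cond_exp M (vimage_algebra (space M) V N) g \<omega> = h (V \<omega>)"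
    using borel_measurable_vimage_algebra_factor borel_measurable_cond_exp by blast
  then have "\<exists>h. h \<in> borel_measurable N \<and>
      (AE \<omega> in M. real_cond_exp M (vimage_algebra (space M) V N) g \<omega> = h (V \<omega>))"
    by auto
  note spec = someI_ex[OF this, folded cond_fn_def]
  show "cond_fn M V N g \<in> borel_measurable N"
    using spec by (rule conjunct1)
  show "AE \<omega> in M. real_cond_exp M (vimage_algebra (space M) V N) g \<omega> = cond_fn M V N g (V \<omega>)"
    using spec by (rule conjunct2)
qed

lemma (in finite_measure) real_cond_exp_vimage_algebra_eqI:
  assumes U[measurable]: "U \<in> measurable M N" and g[measurable]: "g \<in> borel_measurable N"
    and f: "integrable M f" and gU: "integrable M (\<lambda>\<omega>. g (U \<omega>))"
    and eq: "\<And>B. B \<in> sets N \<Longrightarrow>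
      (\<integral>\<omega>. indicator B (U \<omega>) * f \<omega> \<partial>M) = (\<integral>\<omega>. indicator B (U \<omega>) * g (U \<omega>) \<partial>M)"
  shows "AE \<omega> in M. real_cond_exp M (vimage_algebra (space M) U N) f \<omega> = g (U \<omega>)"
proof -
  interpret F: finite_measure_subalgebra M "vimage_algebra (space M) U N"
    by (rule finite_measure_subalgebra_vimage_algebra[OF U])
  have U_space: "U \<in> space M \<rightarrow> space N" using U by (auto simp: measurable_def)
  show ?thesis
  proof (rule F.real_cond_exp_charact[OF _ f gU measurable_vimage_algebra_compose[OF U g]])
    fix S assume "S \<in> sets (vimage_algebra (space M) U N)"
    then obtain B where B: "B \<in> sets N" and S: "S = U -` B \<inter> space M"
      unfolding sets_vimage_algebra2[OF U_space] by blast
    have ind: "indicator S \<omega> = indicator B (U \<omega>)" if "\<omega> \<in> space M" for \<omega> :: 'a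
      using that S by (simp add: indicator_def)
    have "(\<integral>\<omega>\<in>S. f \<omega> \<partial>M) = (\<integral>\<omega>. indicator B (U \<omega>) * f \<omega> \<partial>M)"
      unfolding set_lebesgue_integral_def by (rule Bochner_Integration.integral_cong) (simp_all add: ind)
    also have "\<dots> = (\<integral>\<omega>. indicator B (U \<omega>) * g (U \<omega>) \<partial>M)" by (rule eq[OF B])
    also have "\<dots> = (\<integral>\<omega>\<in>S. g (U \<omega>) \<partial>M)"
      unfolding set_lebesgue_integral_def by (rule Bochner_Integration.integral_cong) (simp_all add: ind)
    finally show "(\<integral>\<omega>\<in>S. f \<omega> \<partial>M) = (\<integral>\<omega>\<in>S. g (U \<omega>) \<partial>M)" .
  qed
qed

section \<open>Conditional expectations\<close>

lemma (in sigma_finite_subalgebra) real_cond_exp_nested_add_F_meas: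
  assumes subalgs: "subalgebra M G" "subalgebra G F" and f: "integrable M f"
    and g: "integrable M g" and l: "integrable M l" "l \<in> borel_measurable F"
    and fG: "AE x in M. real_cond_exp M G f x = g x + l x"
  shows "AE x in M. real_cond_exp M F f x = real_cond_exp M F g x + l x"
proof -
  have "AE x in M. real_cond_exp M F (real_cond_exp M G f) x = real_cond_exp M F (\<lambda>x. g x + l x) x"
    by (rule real_cond_exp_cong[OF fG]) (use g l in simp_all)
  with real_cond_exp_nested_subalg[OF subalgs f] real_cond_exp_add[OF g l(1)] real_cond_exp_F_meas[OF l]
  show ?thesis by eventually_elim simp
qed

context finite_measure_subalgebra
begin

lemma real_cond_exp_diff_F_meas:
  assumes Y: "integrable M Y" and m[measurable]: "m \<in> borel_measurable F"
  shows "AE x in M. real_cond_exp M F (\<lambda>x. Y x - m x) x = real_cond_exp M F Y x - m x"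
proof -
  have [measurable]: "Y \<in> borel_measurable M" "m \<in> borel_measurable M"
    using Y measurable_from_subalg[OF subalg m] by auto
  \<comment> \<open>\<open>m\<close> need not be integrable, so we localise to the \<open>F\<close>-sets where \<open>\<bar>m\<bar> \<le> n\<close>.\<close>
  define t where "t n x = (if \<bar>m x\<bar> \<le> real n then 1 else 0 :: real)" for n x
  have [measurable]: "t n \<in> borel_measurable F" "t n \<in> borel_measurable M" for n
    unfolding t_def by measurable
  have trunc: "AE x in M. t n x * real_cond_exp M F (\<lambda>x. Y x - m x) x = t n x * (real_cond_exp M F Y x - m x)"
    for n
  proof -
    have tY: "integrable M (\<lambda>x. t n x * Y x)"
      by (rule Bochner_Integration.integrable_bound[OF Y]) (auto simp: t_def)
    have tm: "integrable M (\<lambda>x. t n x * m x)"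
      by (rule Bochner_Integration.integrable_bound[OF integrable_const[of "real n"]]) (auto simp: t_def)
    have split: "(\<lambda>x. t n x * (Y x - m x)) = (\<lambda>x. t n x * Y x - t n x * m x)"
      by (simp add: fun_eq_iff right_diff_distrib)
    have "AE x in M. real_cond_exp M F (\<lambda>x. t n x * (Y x - m x)) x
        = t n x * real_cond_exp M F (\<lambda>x. Y x - m x) x"
      by (rule real_cond_exp_mult) (simp_all add: split tY tm)
    moreover have "AE x in M. real_cond_exp M F (\<lambda>x. t n x * Y x - t n x * m x) x
        = real_cond_exp M F (\<lambda>x. t n x * Y x) x - real_cond_exp M F (\<lambda>x. t n x * m x) x"
      by (rule real_cond_exp_diff[OF tY tm])
    moreover have "AE x in M. real_cond_exp M F (\<lambda>x. t n x * Y x) x = t n x * real_cond_exp M F Y x"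
      by (rule real_cond_exp_mult) (simp_all add: tY)
    moreover have "AE x in M. real_cond_exp M F (\<lambda>x. t n x * m x) x = t n x * m x"
      by (rule real_cond_exp_F_meas[OF tm]) measurable
    ultimately show ?thesis unfolding split by eventually_elim (simp add: right_diff_distrib)
  qed
  have "AE x in M. \<forall>n. t n x * real_cond_exp M F (\<lambda>x. Y x - m x) x
      = t n x * (real_cond_exp M F Y x - m x)"
    unfolding AE_all_countable using trunc by blast
  then show ?thesis
  proof eventually_elim
    case (elim x)
    obtain n :: nat where "\<bar>m x\<bar> \<le> real n" using real_arch_simple by blast
    with elim[rule_format, of n] show ?case by (simp add: t_def)
  qed
qed

lemma real_cond_exp_mult_diff_F_meas:
  assumes [measurable]: "c \<in> borel_measurable F" and m[measurable]: "m \<in> borel_measurable F"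
    and Y: "integrable M Y" and cY: "integrable M (\<lambda>x. c x * (Y x - m x))"
  shows "AE x in M. real_cond_exp M F (\<lambda>x. c x * (Y x - m x)) x = c x * (real_cond_exp M F Y x - m x)"
proof -
  have [measurable]: "Y \<in> borel_measurable M" "m \<in> borel_measurable M"
    using Y measurable_from_subalg[OF subalg m] by auto
  have "AE x in M. real_cond_exp M F (\<lambda>x. c x * (Y x - m x)) x = c x * real_cond_exp M F (\<lambda>x. Y x - m x) x"
    by (rule real_cond_exp_mult) (simp_all add: cY)
  with real_cond_exp_diff_F_meas[OF Y m] show ?thesis by eventually_elim simp
qed

lemma real_cond_exp_binary_mixture:
  assumes [measurable]: "A \<in> borel_measurable M" and A_bin: "\<forall>x\<in>space M. A x \<in> {0, 1}"
    and pA: "AE x in M. real_cond_exp M F A x = p x"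
    and [measurable]: "a0 \<in> borel_measurable F" "a1 \<in> borel_measurable F"
    and a1A: "integrable M (\<lambda>x. a1 x * A x)" and a0A: "integrable M (\<lambda>x. a0 x * (1 - A x))"
  shows "AE x in M. real_cond_exp M F (\<lambda>x. a1 x * A x + a0 x * (1 - A x)) x
    = a1 x * p x + a0 x * (1 - p x)"
proof -
  have one: "integrable M (\<lambda>_. 1 :: real)" by simp
  have A_int: "integrable M A"
    by (rule Bochner_Integration.integrable_bound[OF one]) (use A_bin in \<open>auto intro!: AE_I2\<close>)
  have "AE x in M. real_cond_exp M F (\<lambda>x. 1 - A x) x = 1 - p x"
    using real_cond_exp_diff[OF one A_int] real_cond_exp_F_meas[OF one borel_measurable_const] pA
    by eventually_elim simp
  moreover have "AE x in M. real_cond_exp M F (\<lambda>x. a1 x * A x) x = a1 x * real_cond_exp M F A x"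
    by (rule real_cond_exp_mult) (simp_all add: a1A)
  moreover have "AE x in M. real_cond_exp M F (\<lambda>x. a0 x * (1 - A x)) x
      = a0 x * real_cond_exp M F (\<lambda>x. 1 - A x) x"
    by (rule real_cond_exp_mult) (simp_all add: a0A)
  ultimately show ?thesis
    using real_cond_exp_add[OF a1A a0A] pA by eventually_elim simp
qed

lemma real_cond_exp_ipw:
  assumes A[measurable]: "A \<in> borel_measurable M" and A_bin: "\<forall>x\<in>space M. A x \<in> {0, 1}"
    and p[measurable]: "p \<in> borel_measurable F" and p_bd: "\<forall>x\<in>space M. 0 < p x \<and> p x < 1"
    and pA: "AE x in M. real_cond_exp M F A x = p x"
    and u0[measurable]: "u0 \<in> borel_measurable F" and u1[measurable]: "u1 \<in> borel_measurable F"
    and D: "integrable M (\<lambda>x. (A x - p x) / (p x * (1 - p x)) * (if A x = 1 then u1 x else u0 x))"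
  shows "AE x in M. real_cond_exp M F (\<lambda>x. (A x - p x) / (p x * (1 - p x)) *
      (if A x = 1 then u1 x else u0 x)) x = u1 x - u0 x"
proof -
  note [measurable] = measurable_from_subalg[OF subalg p] measurable_from_subalg[OF subalg u0]
    measurable_from_subalg[OF subalg u1]
  define a1 where "a1 x = u1 x / p x" for x
  define a0 where "a0 x = - u0 x / (1 - p x)" for x
  have a_meas[measurable]: "a0 \<in> borel_measurable F" "a1 \<in> borel_measurable F"
    "a0 \<in> borel_measurable M" "a1 \<in> borel_measurable M"
    unfolding a0_def[abs_def] a1_def[abs_def] by measurable
  have split: "(A x - p x) / (p x * (1 - p x)) * (if A x = 1 then u1 x else u0 x)
      = a1 x * A x + a0 x * (1 - A x)" if "x \<in> space M" for x
  proof -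
    have "A x = 0 \<or> A x = 1" using A_bin that by auto
    then show ?thesis using p_bd that by (elim disjE) (auto simp: a1_def a0_def field_simps)
  qed
  have "integrable M (\<lambda>x. a1 x * A x)" "integrable M (\<lambda>x. a0 x * (1 - A x))"
    by (rule Bochner_Integration.integrable_bound[OF D], measurable,
        use A_bin split in \<open>auto intro!: AE_I2\<close>)+
  from real_cond_exp_binary_mixture[OF A A_bin pA a_meas(1,2) this] AE_space
  have "AE x in M. real_cond_exp M F (\<lambda>x. a1 x * A x + a0 x * (1 - A x)) x = u1 x - u0 x"
    by eventually_elim (use p_bd in \<open>auto simp: a1_def a0_def\<close>)
  moreover have "AE x in M. real_cond_exp M F (\<lambda>x. (A x - p x) / (p x * (1 - p x)) *
      (if A x = 1 then u1 x else u0 x)) x = real_cond_exp M F (\<lambda>x. a1 x * A x + a0 x * (1 - A x)) x"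
    by (rule real_cond_exp_cong[OF AE_I2[OF split]]) measurable
  ultimately show ?thesis by eventually_elim simp
qed

end

section \<open>Reweighting by a density ratio\<close>

lemma
  fixes g G :: "'b \<Rightarrow> real"
  assumes V[measurable]: "V \<in> measurable M N" and dens: "distr M N V = density N (\<lambda>p. ennreal (g p))"
    and g[measurable]: "g \<in> borel_measurable N" and g_nonneg: "\<And>p. 0 \<le> g p"
    and G[measurable]: "G \<in> borel_measurable N"
  shows integrable_distr_density_iff: "integrable M (\<lambda>\<omega>. G (V \<omega>)) \<longleftrightarrow> integrable N (\<lambda>p. g p * G p)"
    and integral_distr_density: "(\<integral>\<omega>. G (V \<omega>) \<partial>M) = (\<integral>p. g p * G p \<partial>N)"
proof -
  have "integrable M (\<lambda>\<omega>. G (V \<omega>)) \<longleftrightarrow> integrable (distr M N V) G"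
    by (rule integrable_distr_eq[symmetric]) measurable
  also have "\<dots> \<longleftrightarrow> integrable N (\<lambda>p. g p * G p)"
    unfolding dens using integrable_density[OF G g] g_nonneg by simp
  finally show "integrable M (\<lambda>\<omega>. G (V \<omega>)) \<longleftrightarrow> integrable N (\<lambda>p. g p * G p)" .
  have "(\<integral>\<omega>. G (V \<omega>) \<partial>M) = integral\<^sup>L (distr M N V) G"
    by (rule integral_distr[symmetric]) measurable
  also have "\<dots> = (\<integral>p. g p * G p \<partial>N)"
    unfolding dens using integral_density[OF G g] g_nonneg by simp
  finally show "(\<integral>\<omega>. G (V \<omega>) \<partial>M) = (\<integral>p. g p * G p \<partial>N)" .
qed

lemma (in pair_sigma_finite) integral_marginal_swap:
  fixes f :: "'a \<Rightarrow> 'b \<Rightarrow> real" and k :: "'a \<times> 'b \<Rightarrow> real"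
  assumes f_int: "integrable (M1 \<Otimes>\<^sub>M M2) (\<lambda>p. f (fst p) (snd p))" and f_nonneg: "\<And>x y. 0 \<le> f x y"
    and [measurable]: "k \<in> borel_measurable (M1 \<Otimes>\<^sub>M M2)"
    and km: "integrable (M1 \<Otimes>\<^sub>M M2) (\<lambda>p. k p * (\<integral>y. f (fst p) y \<partial>M2))"
  shows "integrable (M1 \<Otimes>\<^sub>M M2) (\<lambda>p. f (fst p) (snd p) * (\<integral>y. k (fst p, y) \<partial>M2))"
    and "(\<integral>p. k p * (\<integral>y. f (fst p) y \<partial>M2) \<partial>(M1 \<Otimes>\<^sub>M M2))
      = (\<integral>p. f (fst p) (snd p) * (\<integral>y. k (fst p, y) \<partial>M2) \<partial>(M1 \<Otimes>\<^sub>M M2))"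
proof -
  define m where "m x = (\<integral>y. f x y \<partial>M2)" for x
  define K where "K x = (\<integral>y. k (x, y) \<partial>M2)" for x
  have [measurable]: "(\<lambda>p. f (fst p) (snd p)) \<in> borel_measurable (M1 \<Otimes>\<^sub>M M2)"
    using f_int by simp
  have [measurable]: "m \<in> borel_measurable M1" "K \<in> borel_measurable M1"
    unfolding m_def[abs_def] K_def[abs_def] by measurable
  have km': "integrable (M1 \<Otimes>\<^sub>M M2) (\<lambda>p. k p * m (fst p))"
    using km by (simp add: m_def)
  have mK: "integrable M1 (\<lambda>x. m x * K x)"
    using integrable_fst'[OF km'] by (simp add: K_def integral_mult_left_zero mult.commute)
  have fK: "integrable (M1 \<Otimes>\<^sub>M M2) (\<lambda>p. f (fst p) (snd p) * K (fst p))"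
  proof (rule Fubini_integrable)
    have "(\<integral>y. norm (f x y * K x) \<partial>M2) = norm (m x * K x)" for x
      using integral_nonneg_AE[of "f x" M2] f_nonneg
      by (simp add: m_def abs_mult integral_mult_left_zero)
    with integrable_norm[OF mK]
    show "integrable M1 (\<lambda>x. \<integral>y. norm (f (fst (x, y)) (snd (x, y)) * K (fst (x, y))) \<partial>M2)"
      by simp
    show "AE x in M1. integrable M2 (\<lambda>y. f (fst (x, y)) (snd (x, y)) * K (fst (x, y)))"
      using AE_integrable_fst'[OF f_int] by eventually_elim simp
  qed measurable
  then show "integrable (M1 \<Otimes>\<^sub>M M2) (\<lambda>p. f (fst p) (snd p) * (\<integral>y. k (fst p, y) \<partial>M2))"
    by (simp add: K_def)
  have "(\<integral>p. k p * m (fst p) \<partial>(M1 \<Otimes>\<^sub>M M2)) = (\<integral>x. (\<integral>y. k (x, y) * m x \<partial>M2) \<partial>M1)"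
    using integral_fst'[OF km'] by simp
  also have "\<dots> = (\<integral>x. (\<integral>y. f x y * K x \<partial>M2) \<partial>M1)"
    by (simp add: K_def m_def integral_mult_left_zero mult.commute)
  also have "\<dots> = (\<integral>p. f (fst p) (snd p) * K (fst p) \<partial>(M1 \<Otimes>\<^sub>M M2))"
    using integral_fst'[OF fK] by simp
  finally show "(\<integral>p. k p * (\<integral>y. f (fst p) y \<partial>M2) \<partial>(M1 \<Otimes>\<^sub>M M2))
      = (\<integral>p. f (fst p) (snd p) * (\<integral>y. k (fst p, y) \<partial>M2) \<partial>(M1 \<Otimes>\<^sub>M M2))"
    by (simp add: m_def K_def)
qed

context prob_space
begin

text \<open>If \<open>V = (V\<^sub>1, V\<^sub>2)\<close> has the density \<open>f\<close> with respect to \<open>lborel \<Otimes> Q\<close>, then \<open>m(v) / f(v, w)\<close>,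
  with \<open>m(v) = \<integral> f(v, w) dQ(w)\<close> the density of \<open>V\<^sub>1\<close>, is the Radon--Nikodym derivative of the
  product of the law of \<open>V\<^sub>1\<close> and \<open>Q\<close> with respect to the law of \<open>V\<close>.\<close>
lemma integral_density_ratio_weight:
  fixes V :: "'a \<Rightarrow> real \<times> 'w" and f :: "real \<Rightarrow> 'w \<Rightarrow> real" and k :: "real \<times> 'w \<Rightarrow> real"
  assumes Q: "sigma_finite_measure Q"
    and V[measurable]: "V \<in> measurable M (lborel \<Otimes>\<^sub>M Q)"
    and f[measurable]: "(\<lambda>p. f (fst p) (snd p)) \<in> borel_measurable (lborel \<Otimes>\<^sub>M Q)"
    and f_pos: "\<And>t w. 0 < f t w"
    and dens: "distr M (lborel \<Otimes>\<^sub>M Q) V = density (lborel \<Otimes>\<^sub>M Q) (\<lambda>p. ennreal (f (fst p) (snd p)))"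
    and k[measurable]: "k \<in> borel_measurable (lborel \<Otimes>\<^sub>M Q)"
    and int: "integrable M (\<lambda>\<omega>. k (V \<omega>) * ((\<integral>w. f (fst (V \<omega>)) w \<partial>Q) / f (fst (V \<omega>)) (snd (V \<omega>))))"
  shows "integrable M (\<lambda>\<omega>. \<integral>w. k (fst (V \<omega>), w) \<partial>Q)"
    and "(\<integral>\<omega>. k (V \<omega>) * ((\<integral>w. f (fst (V \<omega>)) w \<partial>Q) / f (fst (V \<omega>)) (snd (V \<omega>))) \<partial>M)
      = (\<integral>\<omega>. (\<integral>w. k (fst (V \<omega>), w) \<partial>Q) \<partial>M)"
proof -
  interpret Q: sigma_finite_measure Q by (rule Q)
  interpret pair_sigma_finite lborel Q ..
  define m where "m v = (\<integral>w. f v w \<partial>Q)" for v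
  define K where "K v = (\<integral>w. k (v, w) \<partial>Q)" for v
  have [measurable]: "m \<in> borel_measurable lborel" "K \<in> borel_measurable lborel"
    unfolding m_def[abs_def] K_def[abs_def] by measurable
  have [simp]: "f t w \<noteq> 0" for t w
    using f_pos[of t w] by simp
  note transfer = integrable_distr_density_iff[OF V dens f less_imp_le[OF f_pos]]
    integral_distr_density[OF V dens f less_imp_le[OF f_pos]]
  have transfer_meas: "(\<lambda>p. k p * (m (fst p) / f (fst p) (snd p))) \<in> borel_measurable (lborel \<Otimes>\<^sub>M Q)"
    "(\<lambda>p. K (fst p)) \<in> borel_measurable (lborel \<Otimes>\<^sub>M Q)"
    "(\<lambda>_. 1 :: real) \<in> borel_measurable (lborel \<Otimes>\<^sub>M Q)"
    by measurable
  have cancel: "(\<lambda>p. f (fst p) (snd p) * (k p * (m (fst p) / f (fst p) (snd p)))) = (\<lambda>p. k p * m (fst p))"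
    by (simp add: fun_eq_iff)
  have "integrable M (\<lambda>\<omega>. k (V \<omega>) * (m (fst (V \<omega>)) / f (fst (V \<omega>)) (snd (V \<omega>))))"
    using int by (simp add: m_def)
  then have km: "integrable (lborel \<Otimes>\<^sub>M Q) (\<lambda>p. k p * m (fst p))"
    unfolding transfer(1)[OF transfer_meas(1)] cancel .
  have f_int: "integrable (lborel \<Otimes>\<^sub>M Q) (\<lambda>p. f (fst p) (snd p))"
    using transfer(1)[OF transfer_meas(3)] by simp
  note swap = integral_marginal_swap[OF f_int less_imp_le[OF f_pos] k km[unfolded m_def]]
  show "integrable M (\<lambda>\<omega>. \<integral>w. k (fst (V \<omega>), w) \<partial>Q)"
    using transfer(1)[OF transfer_meas(2)] swap(1) by (simp add: K_def)
  have "(\<integral>\<omega>. k (V \<omega>) * ((\<integral>w. f (fst (V \<omega>)) w \<partial>Q) / f (fst (V \<omega>)) (snd (V \<omega>))) \<partial>M)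
      = (\<integral>p. k p * m (fst p) \<partial>(lborel \<Otimes>\<^sub>M Q))"
    using transfer(2)[OF transfer_meas(1)] unfolding cancel by (simp only: m_def)
  also have "\<dots> = (\<integral>p. f (fst p) (snd p) * K (fst p) \<partial>(lborel \<Otimes>\<^sub>M Q))"
    using swap(2) by (simp add: m_def K_def)
  also have "\<dots> = (\<integral>\<omega>. (\<integral>w. k (fst (V \<omega>), w) \<partial>Q) \<partial>M)"
    using transfer(2)[OF transfer_meas(2)] by (simp add: K_def)
  finally show "(\<integral>\<omega>. k (V \<omega>) * ((\<integral>w. f (fst (V \<omega>)) w \<partial>Q) / f (fst (V \<omega>)) (snd (V \<omega>))) \<partial>M)
      = (\<integral>\<omega>. (\<integral>w. k (fst (V \<omega>), w) \<partial>Q) \<partial>M)" .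
qed

lemma real_cond_exp_density_ratio_weight:
  fixes V :: "'a \<Rightarrow> real \<times> 'w" and f :: "real \<Rightarrow> 'w \<Rightarrow> real" and k :: "real \<times> 'w \<Rightarrow> real"
  assumes Q: "sigma_finite_measure Q"
    and V[measurable]: "V \<in> measurable M (lborel \<Otimes>\<^sub>M Q)"
    and f[measurable]: "(\<lambda>p. f (fst p) (snd p)) \<in> borel_measurable (lborel \<Otimes>\<^sub>M Q)"
    and f_pos: "\<And>t w. 0 < f t w"
    and dens: "distr M (lborel \<Otimes>\<^sub>M Q) V = density (lborel \<Otimes>\<^sub>M Q) (\<lambda>p. ennreal (f (fst p) (snd p)))"
    and k[measurable]: "k \<in> borel_measurable (lborel \<Otimes>\<^sub>M Q)"
    and int: "integrable M (\<lambda>\<omega>. k (V \<omega>) * ((\<integral>w. f (fst (V \<omega>)) w \<partial>Q) / f (fst (V \<omega>)) (snd (V \<omega>))))"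
  shows "AE \<omega> in M. real_cond_exp M (vimage_algebra (space M) (\<lambda>\<omega>. fst (V \<omega>)) borel)
      (\<lambda>\<omega>. k (V \<omega>) * ((\<integral>w. f (fst (V \<omega>)) w \<partial>Q) / f (fst (V \<omega>)) (snd (V \<omega>)))) \<omega>
    = (\<integral>w. k (fst (V \<omega>), w) \<partial>Q)"
proof -
  interpret Q: sigma_finite_measure Q by (rule Q)
  have V1: "(\<lambda>\<omega>. fst (V \<omega>)) \<in> measurable M lborel"
    using measurable_compose[OF V measurable_fst] .
  have m: "(\<lambda>v. \<integral>w. f v w \<partial>Q) \<in> borel_measurable lborel" by measurable
  have [measurable]: "(\<lambda>\<omega>. fst (V \<omega>)) \<in> borel_measurable M"
    "(\<lambda>\<omega>. \<integral>w. f (fst (V \<omega>)) w \<partial>Q) \<in> borel_measurable M"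
    using V1 measurable_compose[OF V1 m] by simp_all
  have [measurable]: "(\<lambda>\<omega>. f (fst (V \<omega>)) (snd (V \<omega>))) \<in> borel_measurable M"
    using measurable_compose[OF V f] by simp
  show ?thesis
  proof (rule real_cond_exp_vimage_algebra_eqI[where g = "\<lambda>v. \<integral>w. k (v, w) \<partial>Q"])
    show "(\<lambda>\<omega>. fst (V \<omega>)) \<in> borel_measurable M" by measurable
    show "(\<lambda>v. \<integral>w. k (v, w) \<partial>Q) \<in> borel_measurable borel" by measurable
    show "integrable M (\<lambda>\<omega>. k (V \<omega>) * ((\<integral>w. f (fst (V \<omega>)) w \<partial>Q) / f (fst (V \<omega>)) (snd (V \<omega>))))"
      by (rule int)
    show "integrable M (\<lambda>\<omega>. \<integral>w. k (fst (V \<omega>), w) \<partial>Q)"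
      by (rule integral_density_ratio_weight(1)[OF assms])
    fix B :: "real set" assume [measurable]: "B \<in> sets borel"
    have kB: "(\<lambda>p. indicator B (fst p) * k p) \<in> borel_measurable (lborel \<Otimes>\<^sub>M Q)" by measurable
    have "integrable M (\<lambda>\<omega>. indicator B (fst (V \<omega>)) * k (V \<omega>) *
        ((\<integral>w. f (fst (V \<omega>)) w \<partial>Q) / f (fst (V \<omega>)) (snd (V \<omega>))))"
      by (rule Bochner_Integration.integrable_bound[OF int]) (measurable, rule AE_I2, simp add: indicator_def)
    from integral_density_ratio_weight(2)[OF Q V f f_pos dens kB this]
    show "(\<integral>\<omega>. indicator B (fst (V \<omega>)) *
        (k (V \<omega>) * ((\<integral>w. f (fst (V \<omega>)) w \<partial>Q) / f (fst (V \<omega>)) (snd (V \<omega>)))) \<partial>M)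
      = (\<integral>\<omega>. indicator B (fst (V \<omega>)) * (\<integral>w. k (fst (V \<omega>), w) \<partial>Q) \<partial>M)"
      by (simp add: mult.assoc integral_mult_right_zero)
  qed
qed

end

section \<open>The partial dependence pseudo-outcome\<close>

locale partial_dependence_data = prob_space M for M :: "'o measure" +
  fixes SX :: "'x measure" and SW :: "'w measure"
    and X :: "'o \<Rightarrow> 'x" and A Y :: "'o \<Rightarrow> real" and vj :: "'x \<Rightarrow> real" and vm :: "'x \<Rightarrow> 'w"
  assumes X_meas[measurable]: "X \<in> measurable M SX"
    and A_meas[measurable]: "A \<in> borel_measurable M" and A_bin: "\<forall>\<omega>\<in>space M. A \<omega> \<in> {0, 1}"
    and Y_int: "integrable M Y"
    and vj_meas[measurable]: "vj \<in> borel_measurable SX" and vm_meas[measurable]: "vm \<in> measurable SX SW"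
begin

abbreviation "V \<equiv> \<lambda>\<omega>. (vj (X \<omega>), vm (X \<omega>))"
abbreviation "Q \<equiv> marg_Vm M X SW vm"
abbreviation "FX \<equiv> vimage_algebra (space M) X SX"
abbreviation "FXA \<equiv> vimage_algebra (space M) (\<lambda>\<omega>. (X \<omega>, A \<omega>)) (SX \<Otimes>\<^sub>M borel)"
abbreviation "FV \<equiv> vimage_algebra (space M) V (borel \<Otimes>\<^sub>M SW)"
abbreviation "FVj \<equiv> vimage_algebra (space M) (\<lambda>\<omega>. vj (X \<omega>)) borel"

lemma sets_Q[measurable_cong]: "sets Q = sets SW"
  by (simp add: marg_Vm_def)

lemma prob_space_Q: "prob_space Q"
  unfolding marg_Vm_def by (rule prob_space_distr) measurable

lemma borel_measurable_integral_Q: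
  fixes g :: "real \<Rightarrow> 'w \<Rightarrow> real"
  assumes "(\<lambda>p. g (fst p) (snd p)) \<in> borel_measurable (borel \<Otimes>\<^sub>M SW)"
  shows "(\<lambda>v. \<integral>w. g v w \<partial>Q) \<in> borel_measurable borel"
proof -
  interpret Q: prob_space Q by (rule prob_space_Q)
  have "sets (borel \<Otimes>\<^sub>M Q) = sets (borel \<Otimes>\<^sub>M SW)"
    by (rule sets_pair_measure_cong[OF refl sets_Q])
  with assms have "case_prod g \<in> borel_measurable (borel \<Otimes>\<^sub>M Q)"
    by (simp add: case_prod_beta' cong: measurable_cong_sets)
  then show ?thesis by (rule Q.borel_measurable_lebesgue_integral)
qed

lemma V_meas[measurable]: "V \<in> measurable M (borel \<Otimes>\<^sub>M SW)"
  by measurable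

lemma borel_measurable_density_ratio:
  fixes g :: "real \<Rightarrow> 'w \<Rightarrow> real"
  assumes g[measurable]: "(\<lambda>p. g (fst p) (snd p)) \<in> borel_measurable (borel \<Otimes>\<^sub>M SW)"
  shows "(\<lambda>\<omega>. (\<integral>w. g (vj (X \<omega>)) w \<partial>Q) / g (vj (X \<omega>)) (vm (X \<omega>))) \<in> borel_measurable M"
proof -
  note [measurable] = borel_measurable_integral_Q[OF g]
  have "(\<lambda>p. (\<integral>w. g (fst p) w \<partial>Q) / g (fst p) (snd p)) \<in> borel_measurable (borel \<Otimes>\<^sub>M SW)"
    by measurable
  from measurable_compose[OF V_meas this] show ?thesis by simp
qed

lemma XA_meas[measurable]: "(\<lambda>\<omega>. (X \<omega>, A \<omega>)) \<in> measurable M (SX \<Otimes>\<^sub>M borel)"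
  by measurable

sublocale FX: finite_measure_subalgebra M FX
  by (rule finite_measure_subalgebra_vimage_algebra[OF X_meas])

sublocale FXA: finite_measure_subalgebra M FXA
  by (rule finite_measure_subalgebra_vimage_algebra[OF XA_meas])

sublocale FV: finite_measure_subalgebra M FV
  by (rule finite_measure_subalgebra_vimage_algebra[OF V_meas])

sublocale FVj: finite_measure_subalgebra M FVj
  by (rule finite_measure_subalgebra_vimage_algebra) measurable

lemma cond_on_V_measurable[measurable]:
  "cond_on_V M X SW vj vm t \<in> borel_measurable (borel \<Otimes>\<^sub>M SW)"
  unfolding cond_on_V_def by (rule cond_fn_measurable[OF V_meas])

lemma real_cond_exp_FV:
  "AE \<omega> in M. real_cond_exp M FV (\<lambda>\<omega>. t (X \<omega>)) \<omega> = cond_on_V M X SW vj vm t (V \<omega>)"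
  unfolding cond_on_V_def by (rule real_cond_exp_eq_cond_fn[OF V_meas])

lemma subalgebra_FXA_FX: "subalgebra FXA FX"
  using subalgebra_vimage_algebra_compose[OF XA_meas measurable_fst] by simp

lemma subalgebra_FXA_FV: "subalgebra FXA FV"
proof -
  have "(\<lambda>p. (vj (fst p), vm (fst p))) \<in> measurable (SX \<Otimes>\<^sub>M borel) (borel \<Otimes>\<^sub>M SW)"
    by measurable
  from subalgebra_vimage_algebra_compose[OF XA_meas this] show ?thesis by simp
qed

lemma subalgebra_FX_FV: "subalgebra FX FV"
proof -
  have "(\<lambda>x. (vj x, vm x)) \<in> measurable SX (borel \<Otimes>\<^sub>M SW)"
    by measurable
  from subalgebra_vimage_algebra_compose[OF X_meas this] show ?thesis by simp
qed

lemma subalgebra_FV_FVj: "subalgebra FV FVj"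
  using subalgebra_vimage_algebra_compose[OF V_meas measurable_fst] by simp

lemma real_cond_exp_FVj_density_ratio_weight:
  assumes f_meas: "(\<lambda>p. f (fst p) (snd p)) \<in> borel_measurable (borel \<Otimes>\<^sub>M SW)"
    and f_pos: "\<And>t w. 0 < f t w"
    and f_true: "distr M (lborel \<Otimes>\<^sub>M Q) V = density (lborel \<Otimes>\<^sub>M Q) (\<lambda>p. ennreal (f (fst p) (snd p)))"
    and k_meas: "k \<in> borel_measurable (borel \<Otimes>\<^sub>M SW)"
    and int: "integrable M (\<lambda>\<omega>. (\<integral>w. f (vj (X \<omega>)) w \<partial>Q) / f (vj (X \<omega>)) (vm (X \<omega>)) * k (V \<omega>))"
  shows "AE \<omega> in M. real_cond_exp M FVj
      (\<lambda>\<omega>. (\<integral>w. f (vj (X \<omega>)) w \<partial>Q) / f (vj (X \<omega>)) (vm (X \<omega>)) * k (V \<omega>)) \<omega>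
    = (\<integral>w. k (vj (X \<omega>), w) \<partial>Q)"
proof -
  have sets_eq: "sets (lborel \<Otimes>\<^sub>M Q) = sets (borel \<Otimes>\<^sub>M SW)"
    by (rule sets_pair_measure_cong[OF sets_lborel sets_Q])
  have "V \<in> measurable M (lborel \<Otimes>\<^sub>M Q)"
    using V_meas by (simp add: measurable_cong_sets[OF refl sets_eq])
  moreover have "(\<lambda>p. f (fst p) (snd p)) \<in> borel_measurable (lborel \<Otimes>\<^sub>M Q)"
    "k \<in> borel_measurable (lborel \<Otimes>\<^sub>M Q)"
    using f_meas k_meas by (simp_all add: measurable_cong_sets[OF sets_eq refl])
  moreover have "integrable M (\<lambda>\<omega>. k (V \<omega>) * ((\<integral>w. f (fst (V \<omega>)) w \<partial>Q) / f (fst (V \<omega>)) (snd (V \<omega>))))"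
    using int by (simp add: mult.commute)
  ultimately have "AE \<omega> in M. real_cond_exp M (vimage_algebra (space M) (\<lambda>\<omega>. fst (V \<omega>)) borel)
      (\<lambda>\<omega>. k (V \<omega>) * ((\<integral>w. f (fst (V \<omega>)) w \<partial>Q) / f (fst (V \<omega>)) (snd (V \<omega>)))) \<omega>
    = (\<integral>w. k (fst (V \<omega>), w) \<partial>Q)"
    by (intro real_cond_exp_density_ratio_weight prob_space_imp_sigma_finite prob_space_Q f_pos f_true)
  then show ?thesis by (simp add: mult.commute)
qed

lemma real_cond_exp_ipw_res_FXA:
  assumes mu_true: "AE \<omega> in M. real_cond_exp M FXA Y \<omega> = (if A \<omega> = 1 then mu1 (X \<omega>) else mu0 (X \<omega>))"
    and [measurable]: "pib \<in> borel_measurable SX" "mu0b \<in> borel_measurable SX" "mu1b \<in> borel_measurable SX"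
    and int_res: "integrable M (ipw_res X A Y pib mu0b mu1b)"
  shows "AE \<omega> in M. real_cond_exp M FXA (ipw_res X A Y pib mu0b mu1b) \<omega>
    = (A \<omega> - pib (X \<omega>)) / (pib (X \<omega>) * (1 - pib (X \<omega>))) *
      (if A \<omega> = 1 then mu1 (X \<omega>) - mu1b (X \<omega>) else mu0 (X \<omega>) - mu0b (X \<omega>))"
proof -
  define c where "c \<omega> = (A \<omega> - pib (X \<omega>)) / (pib (X \<omega>) * (1 - pib (X \<omega>)))" for \<omega>
  define mb where "mb \<omega> = (if A \<omega> = 1 then mu1b (X \<omega>) else mu0b (X \<omega>))" for \<omega>
  have "(\<lambda>p. (snd p - pib (fst p)) / (pib (fst p) * (1 - pib (fst p)))) \<in> borel_measurable (SX \<Otimes>\<^sub>M borel)"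
    by measurable
  from measurable_vimage_algebra_compose[OF XA_meas this]
  have c_meas: "c \<in> borel_measurable FXA" by (simp add: c_def[abs_def])
  have "(\<lambda>p. if snd p = (1::real) then mu1b (fst p) else mu0b (fst p)) \<in> borel_measurable (SX \<Otimes>\<^sub>M borel)"
    by measurable
  from measurable_vimage_algebra_compose[OF XA_meas this]
  have mb_meas: "mb \<in> borel_measurable FXA" by (simp only: fst_conv snd_conv mb_def[abs_def])
  have res: "ipw_res X A Y pib mu0b mu1b = (\<lambda>\<omega>. c \<omega> * (Y \<omega> - mb \<omega>))"
    by (simp add: fun_eq_iff ipw_res_def c_def mb_def)
  note FXA.real_cond_exp_mult_diff_F_meas[OF c_meas mb_meas Y_int int_res[unfolded res]]
  with mu_true show ?thesis unfolding res by eventually_elim (simp add: c_def mb_def)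
qed

lemma real_cond_exp_ipw_res_FX:
  fixes pi :: "'x \<Rightarrow> real"
  assumes [measurable]: "pi \<in> borel_measurable SX" and pi_bd: "\<forall>x\<in>space SX. 0 < pi x \<and> pi x < 1"
    and pi_true: "AE \<omega> in M. real_cond_exp M FX A \<omega> = pi (X \<omega>)"
    and mu_true: "AE \<omega> in M. real_cond_exp M FXA Y \<omega> = (if A \<omega> = 1 then mu1 (X \<omega>) else mu0 (X \<omega>))"
    and [measurable]: "mu0 \<in> borel_measurable SX" "mu1 \<in> borel_measurable SX"
      "mu0b \<in> borel_measurable SX" "mu1b \<in> borel_measurable SX"
    and int_res: "integrable M (ipw_res X A Y pi mu0b mu1b)"
  shows "AE \<omega> in M. real_cond_exp M FX (ipw_res X A Y pi mu0b mu1b) \<omega>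
    = (mu1 (X \<omega>) - mu0 (X \<omega>)) - (mu1b (X \<omega>) - mu0b (X \<omega>))"
proof -
  define D where "D \<omega> = (A \<omega> - pi (X \<omega>)) / (pi (X \<omega>) * (1 - pi (X \<omega>))) *
    (if A \<omega> = 1 then mu1 (X \<omega>) - mu1b (X \<omega>) else mu0 (X \<omega>) - mu0b (X \<omega>))" for \<omega>
  have D_meas[measurable]: "D \<in> borel_measurable M"
    unfolding D_def[abs_def] by measurable
  have res_FXA: "AE \<omega> in M. real_cond_exp M FXA (ipw_res X A Y pi mu0b mu1b) \<omega> = D \<omega>"
    unfolding D_def by (rule real_cond_exp_ipw_res_FXA[OF mu_true _ _ _ int_res]) measurable
  have D_int: "integrable M D"
    by (rule integrable_cong_AE_imp[OF FXA.real_cond_exp_int(1)[OF int_res] D_meas res_FXA])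
  have u0: "(\<lambda>x. mu0 x - mu0b x) \<in> borel_measurable SX" by measurable
  have u1: "(\<lambda>x. mu1 x - mu1b x) \<in> borel_measurable SX" by measurable
  note in_FX = measurable_vimage_algebra_compose[OF X_meas]
  have "\<forall>\<omega>\<in>space M. 0 < pi (X \<omega>) \<and> pi (X \<omega>) < 1"
    using pi_bd measurable_space[OF X_meas] by auto
  from FX.real_cond_exp_ipw[OF A_meas A_bin in_FX[OF \<open>pi \<in> borel_measurable SX\<close>] this pi_true
      in_FX[OF u0] in_FX[OF u1] D_int[unfolded D_def[abs_def]]]
  have "AE \<omega> in M. real_cond_exp M FX D \<omega> = (mu1 (X \<omega>) - mu1b (X \<omega>)) - (mu0 (X \<omega>) - mu0b (X \<omega>))"
    by (simp add: D_def[abs_def])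
  moreover have "AE \<omega> in M. real_cond_exp M FX (real_cond_exp M FXA (ipw_res X A Y pi mu0b mu1b)) \<omega>
      = real_cond_exp M FX (ipw_res X A Y pi mu0b mu1b) \<omega>"
    by (rule FX.real_cond_exp_nested_subalg[OF FXA.subalg subalgebra_FXA_FX int_res])
  moreover have "AE \<omega> in M. real_cond_exp M FX (real_cond_exp M FXA (ipw_res X A Y pi mu0b mu1b)) \<omega>
      = real_cond_exp M FX D \<omega>"
    by (rule FX.real_cond_exp_cong[OF res_FXA borel_measurable_cond_exp2 D_meas])
  ultimately show ?thesis by eventually_elim simp
qed

lemma real_cond_exp_ipw_res_FV:
  fixes pi :: "'x \<Rightarrow> real"
  assumes pi_meas[measurable]: "pi \<in> borel_measurable SX"
    and pi_bd: "\<forall>x\<in>space SX. 0 < pi x \<and> pi x < 1"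
    and pi_true: "AE \<omega> in M. real_cond_exp M FX A \<omega> = pi (X \<omega>)"
    and mu_true: "AE \<omega> in M. real_cond_exp M FXA Y \<omega> = (if A \<omega> = 1 then mu1 (X \<omega>) else mu0 (X \<omega>))"
    and mu_meas[measurable]: "mu0 \<in> borel_measurable SX" "mu1 \<in> borel_measurable SX"
    and nuisance_meas[measurable]:
      "pib \<in> borel_measurable SX" "mu0b \<in> borel_measurable SX" "mu1b \<in> borel_measurable SX"
    and int_res: "integrable M (ipw_res X A Y pib mu0b mu1b)"
    and int_tau: "integrable M (\<lambda>\<omega>. mu1 (X \<omega>) - mu0 (X \<omega>))"
    and int_taub: "integrable M (\<lambda>\<omega>. mu1b (X \<omega>) - mu0b (X \<omega>))"
    and DR: "(mu0b = mu0 \<and> mu1b = mu1) \<or> pib = pi"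
  shows "AE \<omega> in M. real_cond_exp M FV (ipw_res X A Y pib mu0b mu1b) \<omega>
    = cond_on_V M X SW vj vm (\<lambda>x. mu1 x - mu0 x) (V \<omega>)
      - cond_on_V M X SW vj vm (\<lambda>x. mu1b x - mu0b x) (V \<omega>)"
  using DR
proof (elim disjE conjE)
  assume mu_right: "mu0b = mu0" "mu1b = mu1"
  have "AE \<omega> in M. real_cond_exp M FXA (ipw_res X A Y pib mu0b mu1b) \<omega> = 0"
    using real_cond_exp_ipw_res_FXA[OF mu_true nuisance_meas int_res]
    by eventually_elim (simp add: mu_right)
  then have "AE \<omega> in M. real_cond_exp M FV (real_cond_exp M FXA (ipw_res X A Y pib mu0b mu1b)) \<omega>
      = real_cond_exp M FV (\<lambda>_. 0) \<omega>"
    by (rule FV.real_cond_exp_cong) measurable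
  with FV.real_cond_exp_nested_subalg[OF FXA.subalg subalgebra_FXA_FV int_res]
    FV.real_cond_exp_F_meas[OF integrable_zero borel_measurable_const]
  show ?thesis by eventually_elim (simp add: mu_right)
next
  assume pi_right: "pib = pi"
  have res_FX: "AE \<omega> in M. real_cond_exp M FX (ipw_res X A Y pib mu0b mu1b) \<omega>
      = (mu1 (X \<omega>) - mu0 (X \<omega>)) - (mu1b (X \<omega>) - mu0b (X \<omega>))"
    using real_cond_exp_ipw_res_FX[OF pi_meas pi_bd pi_true mu_true mu_meas nuisance_meas(2,3)]
      int_res
    unfolding pi_right by blast
  have "AE \<omega> in M. real_cond_exp M FV (real_cond_exp M FX (ipw_res X A Y pib mu0b mu1b)) \<omega>
      = real_cond_exp M FV (\<lambda>\<omega>. (mu1 (X \<omega>) - mu0 (X \<omega>)) - (mu1b (X \<omega>) - mu0b (X \<omega>))) \<omega>"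
    by (rule FV.real_cond_exp_cong[OF res_FX]) measurable
  with FV.real_cond_exp_nested_subalg[OF FX.subalg subalgebra_FX_FV int_res]
    FV.real_cond_exp_diff[OF int_tau int_taub]
    real_cond_exp_FV[of "\<lambda>x. mu1 x - mu0 x"] real_cond_exp_FV[of "\<lambda>x. mu1b x - mu0b x"]
  show ?thesis by eventually_elim simp
qed

lemma real_cond_exp_FV_add_centered:
  assumes g: "integrable M g" and t: "integrable M (\<lambda>\<omega>. t (X \<omega>))"
  shows "AE \<omega> in M. real_cond_exp M FV (\<lambda>\<omega>. g \<omega> + t (X \<omega>) - cond_on_V M X SW vj vm t (V \<omega>)) \<omega>
    = real_cond_exp M FV g \<omega>"
proof -
  have "(\<lambda>\<omega>. cond_on_V M X SW vj vm t (V \<omega>)) \<in> borel_measurable FV"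
    by (rule measurable_vimage_algebra_compose[OF V_meas cond_on_V_measurable])
  from FV.real_cond_exp_diff_F_meas[OF Bochner_Integration.integrable_add[OF g t] this]
    FV.real_cond_exp_add[OF g t] real_cond_exp_FV[of t]
  show ?thesis by eventually_elim simp
qed

lemma real_cond_exp_phi_pd_FV:
  assumes [measurable]:
      "pib \<in> borel_measurable SX" "mu0b \<in> borel_measurable SX" "mu1b \<in> borel_measurable SX"
    and fb_meas[measurable]: "(\<lambda>p. fb (fst p) (snd p)) \<in> borel_measurable (borel \<Otimes>\<^sub>M SW)"
    and int_res: "integrable M (ipw_res X A Y pib mu0b mu1b)"
    and int_taub: "integrable M (\<lambda>\<omega>. mu1b (X \<omega>) - mu0b (X \<omega>))"
    and int_first: "integrable M (\<lambda>\<omega>.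
         (ipw_res X A Y pib mu0b mu1b \<omega> + (mu1b (X \<omega>) - mu0b (X \<omega>))
            - cond_on_V M X SW vj vm (\<lambda>x. mu1b x - mu0b x) (vj (X \<omega>), vm (X \<omega>)))
         * ((\<integral>w. fb (vj (X \<omega>)) w \<partial>Q) / fb (vj (X \<omega>)) (vm (X \<omega>))))"
    and int_last: "integrable M (\<lambda>\<omega>.
         \<integral>w. cond_on_V M X SW vj vm (\<lambda>x. mu1b x - mu0b x) (vj (X \<omega>), w) \<partial>Q)"
  shows "AE \<omega> in M. real_cond_exp M FV (phi_pd M X A Y SW vj vm pib mu0b mu1b fb) \<omega>
    = (\<integral>w. fb (vj (X \<omega>)) w \<partial>Q) / fb (vj (X \<omega>)) (vm (X \<omega>))
        * real_cond_exp M FV (ipw_res X A Y pib mu0b mu1b) \<omega>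
      + (\<integral>w. cond_on_V M X SW vj vm (\<lambda>x. mu1b x - mu0b x) (vj (X \<omega>), w) \<partial>Q)"
proof -
  define res where "res = ipw_res X A Y pib mu0b mu1b"
  define hb where "hb = cond_on_V M X SW vj vm (\<lambda>x. mu1b x - mu0b x)"
  define W where "W p = (\<integral>w. fb (fst p) w \<partial>Q) / fb (fst p) (snd p)" for p
  define L where "L v = (\<integral>w. hb (v, w) \<partial>Q)" for v
  define T where "T \<omega> = res \<omega> + (mu1b (X \<omega>) - mu0b (X \<omega>)) - hb (V \<omega>)" for \<omega>
  have [measurable]: "hb \<in> borel_measurable (borel \<Otimes>\<^sub>M SW)"
    unfolding hb_def by (rule cond_on_V_measurable)
  have [measurable]: "(\<lambda>v. \<integral>w. fb v w \<partial>Q) \<in> borel_measurable borel"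
    by (rule borel_measurable_integral_Q[OF fb_meas])
  have [measurable]: "L \<in> borel_measurable borel"
    unfolding L_def[abs_def] by (rule borel_measurable_integral_Q) simp
  have [measurable]: "W \<in> borel_measurable (borel \<Otimes>\<^sub>M SW)"
    unfolding W_def[abs_def] by measurable
  have [measurable]: "res \<in> borel_measurable M"
    using int_res unfolding res_def by simp
  have T_meas[measurable]: "T \<in> borel_measurable M"
    unfolding T_def[abs_def] by measurable
  have phi: "phi_pd M X A Y SW vj vm pib mu0b mu1b fb = (\<lambda>\<omega>. W (V \<omega>) * T \<omega> + L (vj (X \<omega>)))"
    by (simp add: fun_eq_iff phi_pd_def Let_def T_def W_def L_def res_def hb_def)
  have WT_int: "integrable M (\<lambda>\<omega>. W (V \<omega>) * T \<omega>)"
    using int_first by (simp add: W_def T_def res_def hb_def mult.commute)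
  have L_int: "integrable M (\<lambda>\<omega>. L (vj (X \<omega>)))"
    using int_last by (simp add: L_def hb_def)
  have WV_FV: "(\<lambda>\<omega>. W (V \<omega>)) \<in> borel_measurable FV"
    by (rule measurable_vimage_algebra_compose[OF V_meas]) measurable
  have "(\<lambda>\<omega>. L (fst (V \<omega>))) \<in> borel_measurable FV"
    by (rule measurable_vimage_algebra_compose[OF V_meas]) measurable
  then have LV_FV: "(\<lambda>\<omega>. L (vj (X \<omega>))) \<in> borel_measurable FV"
    by simp
  have "AE \<omega> in M. real_cond_exp M FV T \<omega> = real_cond_exp M FV res \<omega>"
    using real_cond_exp_FV_add_centered[OF int_res int_taub] by (simp add: T_def[abs_def] res_def hb_def)
  moreover note FV.real_cond_exp_mult[OF WV_FV T_meas WT_int]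
  moreover note FV.real_cond_exp_add[OF WT_int L_int]
  moreover note FV.real_cond_exp_F_meas[OF L_int LV_FV]
  ultimately show ?thesis
    unfolding phi by eventually_elim (simp add: W_def L_def hb_def res_def)
qed

end

theorem theorem2:
  fixes M :: "'o measure" and SX :: "'x measure" and SW :: "'w measure"
    and X :: "'o \<Rightarrow> 'x" and A Y :: "'o \<Rightarrow> real"
    and vj :: "'x \<Rightarrow> real" and vm :: "'x \<Rightarrow> 'w"
    and pi mu0 mu1 pib mu0b mu1b :: "'x \<Rightarrow> real"
    and f fb :: "real \<Rightarrow> 'w \<Rightarrow> real"
  assumes P: "prob_space M"
    and X_meas: "X \<in> measurable M SX"
    and A_meas: "A \<in> borel_measurable M" and A_bin: "\<forall>\<omega>\<in>space M. A \<omega> \<in> {0, 1}"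
    and Y_meas: "Y \<in> borel_measurable M" and Y_int: "integrable M Y"
    and vj_meas: "vj \<in> borel_measurable SX" and vm_meas: "vm \<in> measurable SX SW"
    (* true propensity score pi(X) = P(A = 1 | X) *)
    and pi_meas: "pi \<in> borel_measurable SX"
    and pi_bd: "\<forall>x\<in>space SX. 0 < pi x \<and> pi x < 1"
    and pi_true: "AE \<omega> in M. real_cond_exp M (vimage_algebra (space M) X SX) A \<omega> = pi (X \<omega>)"
    (* true outcome regressions mu_a(X) = E[Y | A = a, X] *)
    and mu0_meas: "mu0 \<in> borel_measurable SX" and mu1_meas: "mu1 \<in> borel_measurable SX"
    and mu_true: "AE \<omega> in M.
       real_cond_exp M (vimage_algebra (space M) (\<lambda>\<omega>. (X \<omega>, A \<omega>)) (SX \<Otimes>\<^sub>M borel)) Y \<omega>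
         = (if A \<omega> = 1 then mu1 (X \<omega>) else mu0 (X \<omega>))"
    (* true conditional density of V_j given V_{-j} *)
    and f_meas: "(\<lambda>p. f (fst p) (snd p)) \<in> borel_measurable (borel \<Otimes>\<^sub>M SW)"
    and f_nonneg: "\<forall>t w. 0 \<le> f t w"
    and f_true: "distr M (lborel \<Otimes>\<^sub>M marg_Vm M X SW vm) (\<lambda>\<omega>. (vj (X \<omega>), vm (X \<omega>)))
       = density (lborel \<Otimes>\<^sub>M marg_Vm M X SW vm) (\<lambda>p. ennreal (f (fst p) (snd p)))"
    (* candidate nuisances *)
    and pib_meas: "pib \<in> borel_measurable SX"
    and mu0b_meas: "mu0b \<in> borel_measurable SX" and mu1b_meas: "mu1b \<in> borel_measurable SX"
    and fb_meas: "(\<lambda>p. fb (fst p) (snd p)) \<in> borel_measurable (borel \<Otimes>\<^sub>M SW)"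
    and pib_bd: "\<forall>x. 0 < pib x \<and> pib x < 1"
    and fb_pos: "\<forall>t w. 0 < fb t w"
    (* integrability conditions (implicit in the paper) *)
    and int_tau: "integrable M (\<lambda>\<omega>. mu1 (X \<omega>) - mu0 (X \<omega>))"
    and int_taub: "integrable M (\<lambda>\<omega>. mu1b (X \<omega>) - mu0b (X \<omega>))"
    and int_res: "integrable M (ipw_res X A Y pib mu0b mu1b)"
    and int_first: "integrable M (\<lambda>\<omega>.
         (ipw_res X A Y pib mu0b mu1b \<omega> + (mu1b (X \<omega>) - mu0b (X \<omega>))
            - cond_on_V M X SW vj vm (\<lambda>x. mu1b x - mu0b x) (vj (X \<omega>), vm (X \<omega>)))
         * ((\<integral>w. fb (vj (X \<omega>)) w \<partial>marg_Vm M X SW vm) / fb (vj (X \<omega>)) (vm (X \<omega>))))"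
    and int_last: "integrable M (\<lambda>\<omega>.
         \<integral>w. cond_on_V M X SW vj vm (\<lambda>x. mu1b x - mu0b x) (vj (X \<omega>), w) \<partial>marg_Vm M X SW vm)"
    and int_sec_b: "AE \<omega> in M. integrable (marg_Vm M X SW vm)
         (\<lambda>w. cond_on_V M X SW vj vm (\<lambda>x. mu1b x - mu0b x) (vj (X \<omega>), w))"
    and int_sec: "AE \<omega> in M. integrable (marg_Vm M X SW vm)
         (\<lambda>w. cond_on_V M X SW vj vm (\<lambda>x. mu1 x - mu0 x) (vj (X \<omega>), w))"
    (* double robustness condition *)
    and DR: "(mu0b = mu0 \<and> mu1b = mu1) \<or> (pib = pi \<and> fb = f)"
  shows "AE \<omega> in M.
     real_cond_exp M (vimage_algebra (space M) (\<lambda>\<omega>. vj (X \<omega>)) borel)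
       (phi_pd M X A Y SW vj vm pib mu0b mu1b fb) \<omega>
     = theta_pd M X SW vj vm mu0 mu1 (vj (X \<omega>))"
proof -
  \<comment> \<open>\<open>Y_meas\<close> follows from \<open>Y_int\<close>.\<close>
  interpret partial_dependence_data M SX SW X A Y vj vm
    using P X_meas A_meas A_bin Y_int vj_meas vm_meas
    by (simp add: partial_dependence_data_def partial_dependence_data_axioms_def)
  define phi where "phi = phi_pd M X A Y SW vj vm pib mu0b mu1b fb"
  define h where "h = cond_on_V M X SW vj vm (\<lambda>x. mu1 x - mu0 x)"
  define hb where "hb = cond_on_V M X SW vj vm (\<lambda>x. mu1b x - mu0b x)"
  define W where "W \<omega> = (\<integral>w. fb (vj (X \<omega>)) w \<partial>Q) / fb (vj (X \<omega>)) (vm (X \<omega>))" for \<omega>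
  define L where "L v = (\<integral>w. hb (v, w) \<partial>Q)" for v
  have [measurable]: "h \<in> borel_measurable (borel \<Otimes>\<^sub>M SW)" "hb \<in> borel_measurable (borel \<Otimes>\<^sub>M SW)"
    "L \<in> borel_measurable borel"
    unfolding h_def hb_def L_def[abs_def] by (simp_all add: borel_measurable_integral_Q)
  have [measurable]: "W \<in> borel_measurable M"
    unfolding W_def[abs_def] by (rule borel_measurable_density_ratio[OF fb_meas])
  have phi_int: "integrable M phi"
    using Bochner_Integration.integrable_add[OF int_first int_last]
    by (simp add: phi_def phi_pd_def[abs_def] Let_def)
  have "(mu0b = mu0 \<and> mu1b = mu1) \<or> pib = pi"
    using DR by blast
  note res_FV = real_cond_exp_ipw_res_FV[OF pi_meas pi_bd pi_true mu_true mu0_meas mu1_meas pib_meas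
      mu0b_meas mu1b_meas int_res int_tau int_taub this]
  have phi_FV: "AE \<omega> in M. real_cond_exp M FV phi \<omega> = W \<omega> * (h (V \<omega>) - hb (V \<omega>)) + L (vj (X \<omega>))"
    using real_cond_exp_phi_pd_FV[OF pib_meas mu0b_meas mu1b_meas fb_meas int_res int_taub int_first int_last]
      res_FV
    by eventually_elim (auto simp: phi_def W_def L_def h_def hb_def)
  have "integrable M (\<lambda>\<omega>. W \<omega> * (h (V \<omega>) - hb (V \<omega>)) + L (vj (X \<omega>)))"
    by (rule integrable_cong_AE_imp[OF FV.real_cond_exp_int(1)[OF phi_int] _ phi_FV]) measurable
  from Bochner_Integration.integrable_diff[OF this int_last[folded hb_def L_def]]
  have gap_int: "integrable M (\<lambda>\<omega>. W \<omega> * (h (V \<omega>) - hb (V \<omega>)))"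
    by simp
  have gap_FVj: "AE \<omega> in M. real_cond_exp M FVj (\<lambda>\<omega>. W \<omega> * (h (V \<omega>) - hb (V \<omega>))) \<omega>
      = (\<integral>w. h (vj (X \<omega>), w) - hb (vj (X \<omega>), w) \<partial>Q)"
    using DR
  proof (elim disjE conjE)
    assume "mu0b = mu0" "mu1b = mu1"
    then show ?thesis by (simp add: h_def hb_def)
  next
    assume fb_f: "fb = f"
    have f_pos: "\<And>t w. 0 < f t w"
      using fb_pos by (simp add: fb_f)
    have "(\<lambda>p. h p - hb p) \<in> borel_measurable (borel \<Otimes>\<^sub>M SW)"
      by measurable
    from real_cond_exp_FVj_density_ratio_weight[OF f_meas f_pos f_true this] gap_int
    show ?thesis by (simp add: W_def fb_f)
  qed
  have L_FVj: "(\<lambda>\<omega>. L (vj (X \<omega>))) \<in> borel_measurable FVj"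
    by (rule measurable_vimage_algebra_compose) measurable
  from FVj.real_cond_exp_nested_add_F_meas[OF FV.subalg subalgebra_FV_FVj phi_int gap_int
      int_last[folded hb_def L_def] L_FVj phi_FV] gap_FVj int_sec int_sec_b
  show ?thesis
    by eventually_elim (simp add: phi_def theta_pd_def h_def hb_def L_def)
qed

end
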